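(* Let $n\ge 1$ and let $p,q,r$ be nonzero real numbers. If the map $(A,B,C)\mapsto \mathrm{Tr}[A^{q/2}B^pA^{q/2}C^r]$ is jointly convex (respectively jointly concave) on $\mathcal{P}_n\times\mathcal{P}_n\times\mathcal{P}_n$, then the matrix-valued map $(A,B)\mapsto A^{q/2}B^pA^{q/2}$ is jointly operator convex (respectively jointly operator concave) on $\mathcal{P}_n\times\mathcal{P}_n$.
   Context: $\mathcal{P}_n$ denotes the set of $n\times n$ positive definite complex matrices. A map $F:\mathcal{P}_n\times\mathcal{P}_n\to M_n(\mathbb{C})_{\mathrm{sa}}$ is jointly operator convex if $F(\lambda A_1+(1-\lambda)A_2,\lambda B_1+(1-\lambda)B_2)\le \lambda F(A_1,B_1)+(1-\lambda)F(A_2,B_2)$ in the positive semidefinite (Loewner) order for all $A_i,B_i\in\mathcal{P}_n$, $\lambda\in[0,1]$; operator concave is defined with the reversed inequality. *)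

theory Defs
  imports "HOL-Analysis.Analysis"
begin

text \<open>Complex n x n matrices are represented as complex^'n^'n, the dimension n = CARD('n) \<ge> 1.\<close>

definition cadj :: "complex^'n^'n \<Rightarrow> complex^'n^'n" where
  "cadj A = (\<chi> i j. cnj (A $ j $ i))"

definition hermitian :: "complex^'n^'n \<Rightarrow> bool" where
  "hermitian A \<longleftrightarrow> cadj A = A"

definition qform :: "complex^'n^'n \<Rightarrow> complex^'n \<Rightarrow> complex" where
  "qform A x = (\<Sum>i\<in>UNIV. \<Sum>j\<in>UNIV. cnj (x $ i) * A $ i $ j * x $ j)"

definition posdef :: "complex^'n^'n \<Rightarrow> bool" where
  "posdef A \<longleftrightarrow> hermitian A \<and> (\<forall>x. x \<noteq> 0 \<longrightarrow> Re (qform A x) > 0)"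

definition possemidef :: "complex^'n^'n \<Rightarrow> bool" where
  "possemidef A \<longleftrightarrow> hermitian A \<and> (\<forall>x. Re (qform A x) \<ge> 0)"

definition loewner_le :: "complex^'n^'n \<Rightarrow> complex^'n^'n \<Rightarrow> bool" where
  "loewner_le X Y \<longleftrightarrow> possemidef (Y - X)"

definition unitary :: "complex^'n^'n \<Rightarrow> bool" where
  "unitary U \<longleftrightarrow> cadj U ** U = mat 1"

definition rdiag :: "('n \<Rightarrow> real) \<Rightarrow> complex^'n^'n" where
  "rdiag d = (\<chi> i j. if i = j then complex_of_real (d i) else 0)"

definition mpow :: "complex^'n^'n \<Rightarrow> real \<Rightarrow> complex^'n^'n" where
  "mpow A s = (SOME X. \<exists>U d. unitary U \<and> A = U ** rdiag d ** cadj U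
                         \<and> X = U ** rdiag (\<lambda>i. d i powr s) ** cadj U)"

end

theory Submission
  imports Defs
begin

(* Fix r \<noteq> 0 and put F(A,B) = A^(q/2) B^p A^(q/2).  Taking C1 = C2 = C in the trace
   hypothesis shows that the Hermitian matrix M = t F(A1,B1) + (1-t) F(A2,B2) - F(A,B)
   (resp. its negative in the concave case) satisfies Re tr(M C^r) \<ge> 0 for every positive
   definite C.  Such an M is positive semidefinite: for a unit vector u and 0 < e < 1 the
   positive definite matrix C = e^(1/r) I + (1 - e^(1/r)) P_u, with P_u the projection onto u,
   has C^r = e I + (1 - e) P_u, so  0 \<le> e tr M + (1 - e) <u, M u>, and e \<rightarrow> 0 gives <u, M u> \<ge> 0. *)

section \<open>The standard inner product on complex vectors\<close>

definition cinner :: "complex^'n \<Rightarrow> complex^'n \<Rightarrow> complex" where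
  "cinner x y = (\<Sum>i\<in>UNIV. cnj (x $ i) * y $ i)"

lemma scaleR_as_smult: "t *\<^sub>R (x::complex^'n) = of_real t *s x"
  unfolding vec_eq_iff vector_scaleR_component vector_smult_component
  by (simp add: scaleR_conv_of_real)

lemma cinner_add_left: "cinner (x + y) z = cinner x z + cinner y z"
  by (simp add: cinner_def distrib_right sum.distrib)
lemma cinner_add_right: "cinner z (x + y) = cinner z x + cinner z y"
  by (simp add: cinner_def distrib_left sum.distrib)
lemma cinner_diff_left: "cinner (x - y) z = cinner x z - cinner y z"
  by (simp add: cinner_def left_diff_distrib sum_subtractf)
lemma cinner_diff_right: "cinner z (x - y) = cinner z x - cinner z y"
  by (simp add: cinner_def right_diff_distrib sum_subtractf)
lemma cinner_smult_left: "cinner (c *s x) z = cnj c * cinner x z"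
  by (simp add: cinner_def sum_distrib_left mult.assoc)
lemma cinner_smult_right: "cinner z (c *s x) = c * cinner z x"
  by (simp add: cinner_def sum_distrib_left mult.left_commute)
lemma cinner_scaleR_left: "cinner (t *\<^sub>R x) z = of_real t * cinner x z"
  by (simp add: scaleR_as_smult cinner_smult_left)
lemma cinner_scaleR_right: "cinner z (t *\<^sub>R x) = of_real t * cinner z x"
  by (simp add: scaleR_as_smult cinner_smult_right)
lemma cinner_zero_right [simp]: "cinner z 0 = 0"
  by (simp add: cinner_def)
lemma cinner_sum_right: "finite S \<Longrightarrow> cinner z (\<Sum>j\<in>S. f j) = (\<Sum>j\<in>S. cinner z (f j))"
  by (induction S rule: finite_induct) (auto simp: cinner_add_right)
lemma cinner_commute: "cnj (cinner x y) = cinner y x"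
  by (simp add: cinner_def mult.commute)

lemma cinner_self: "cinner x x = of_real ((norm x)^2)"
proof -
  have "cinner x x = (\<Sum>i\<in>UNIV. of_real ((cmod (x$i))^2))"
    unfolding cinner_def by (intro sum.cong refl) (simp only: complex_norm_square mult.commute)
  also have "(\<Sum>i\<in>UNIV. of_real ((cmod (x$i))^2)) = of_real ((norm x)^2)"
    unfolding norm_vec_def L2_set_def by (simp add: sum_nonneg)
  finally show ?thesis .
qed

lemma qform_cinner: "qform X z = cinner z (X *v z)"
  by (simp add: qform_def cinner_def matrix_vector_mult_def sum_distrib_left mult.assoc)

lemma hermitian_cinner:
  assumes "hermitian A"
  shows "cinner x (A *v y) = cinner (A *v x) y"
proof -
  have h: "\<And>i j. cnj (A $ j $ i) = A $ i $ j"
    using assms unfolding hermitian_def cadj_def by (metis vec_lambda_beta)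
  have "cinner x (A *v y) = (\<Sum>i\<in>UNIV. \<Sum>j\<in>UNIV. cnj (x $ i) * A $ i $ j * y $ j)"
    by (simp add: cinner_def matrix_vector_mult_def sum_distrib_left mult.assoc)
  also have "\<dots> = (\<Sum>j\<in>UNIV. \<Sum>i\<in>UNIV. cnj (x $ i) * A $ i $ j * y $ j)"
    by (rule sum.swap)
  also have "\<dots> = (\<Sum>j\<in>UNIV. (\<Sum>i\<in>UNIV. cnj (A $ j $ i * x $ i)) * y $ j)"
    by (simp only: sum_distrib_right sum_distrib_left complex_cnj_mult h mult_ac)
  also have "\<dots> = cinner (A *v x) y"
    by (simp add: cinner_def matrix_vector_mult_def)
  finally show ?thesis .
qed

lemma mv_scaleR_right: "(A::complex^'n^'n) *v (t *\<^sub>R x) = t *\<^sub>R (A *v x)"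
  by (simp add: scaleR_as_smult vector_scalar_commute)
lemma mv_scaleR_left: "(c *\<^sub>R (A::complex^'n^'n)) *v x = c *\<^sub>R (A *v x)"
  by (simp add: vec_eq_iff matrix_vector_mult_def scaleR_sum_right)

lemma rayleigh_line:
  assumes "hermitian (A::complex^'n^'n)"
  shows "Re (cinner (x + t *\<^sub>R y) (A *v (x + t *\<^sub>R y))) =
     Re (cinner x (A *v x)) + 2 * t * Re (cinner y (A *v x)) + t^2 * Re (cinner y (A *v y))"
proof -
  have "cinner x (A *v y) = cnj (cinner y (A *v x))"
    by (simp add: hermitian_cinner[OF assms] cinner_commute)
  hence "Re (cinner x (A *v y)) = Re (cinner y (A *v x))" by simp
  moreover have "cinner (x + t *\<^sub>R y) (A *v (x + t *\<^sub>R y)) = cinner x (A *v x)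
      + of_real t * cinner x (A *v y) + of_real t * cinner y (A *v x)
      + of_real t * (of_real t * cinner y (A *v y))"
    by (simp only: matrix_vector_right_distrib mv_scaleR_right cinner_add_left cinner_add_right
        cinner_scaleR_left cinner_scaleR_right distrib_left add.assoc) (simp only: add_ac)
  ultimately show ?thesis by (simp add: power2_eq_square)
qed

lemma norm_line:
  "(norm (x + t *\<^sub>R y))^2 = (norm x)^2 + 2 * t * Re (cinner y x) + t^2 * (norm y)^2"
proof -
  have "hermitian (mat 1 :: complex^'n^'n)"
    by (simp add: hermitian_def cadj_def mat_def vec_eq_iff)
  from rayleigh_line[OF this, of x t y] show ?thesis by (simp add: cinner_self)
qed

section \<open>The spectral theorem for Hermitian matrices\<close>

text \<open>If a nonnegative a satisfies 2 t a + t^2 k \<le> 0 for all real t, then a = 0: for small t > 0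
  the linear term dominates.  This is the first-order condition at a maximum.\<close>
lemma quadratic_nonpos_imp_zero:
  fixes a k :: real
  assumes nonpos: "\<And>t. 2 * t * a + t^2 * k \<le> 0" and "a \<ge> 0"
  shows "a = 0"
proof (rule ccontr)
  assume "a \<noteq> 0"
  hence a: "a > 0" using assms by simp
  define t where "t = a / (\<bar>k\<bar> + 1)"
  have t: "t > 0" using a by (simp add: t_def)
  have "t * (2 * a + t * k) \<le> 0"
    using nonpos[of t] by (simp add: algebra_simps power2_eq_square)
  hence "2 * a + t * k \<le> 0" using t by (simp add: mult_le_0_iff)
  moreover have "t * \<bar>k\<bar> < a"
  proof -
    have "t * \<bar>k\<bar> = a * (\<bar>k\<bar> / (\<bar>k\<bar> + 1))" by (simp add: t_def)
    also have "\<dots> < a * 1" using a by (intro mult_strict_left_mono) auto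
    finally show ?thesis by simp
  qed
  moreover have "- (t * \<bar>k\<bar>) \<le> t * k"
  proof -
    have "t * (- k) \<le> t * \<bar>k\<bar>" using t by (intro mult_left_mono) auto
    thus ?thesis by simp
  qed
  ultimately show False using a by linarith
qed

text \<open>Fewer than n orthonormal vectors in C^n have a nonzero common orthogonal vector
  (Gram-Schmidt step: remove from a vector outside their span its components along them).\<close>
lemma orthogonal_vector_exists:
  fixes v :: "'n \<Rightarrow> complex^'n" and I :: "'n set"
  assumes fin: "finite I" and small: "card I < CARD('n)"
    and orth: "\<forall>i\<in>I. \<forall>j\<in>I. cinner (v i) (v j) = (if i = j then 1 else 0)"
  shows "\<exists>w. w \<noteq> 0 \<and> (\<forall>j\<in>I. cinner (v j) w = 0)"
proof -
  have "vec.dim (v ` I) \<le> card I"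
    using fin card_image_le[OF fin, of v] vec.dim_le_card'[of "v ` I"] by simp
  hence "vec.dim (v ` I) < CARD('n)" using small by simp
  hence "vec.span (v ` I) \<noteq> UNIV" using vec_dim_card[where 'a=complex and 'n='n]
    by (metis order.irrefl vec.dim_span)
  then obtain z where z: "z \<notin> vec.span (v ` I)" by blast
  define w where "w = z - (\<Sum>j\<in>I. cinner (v j) z *s v j)"
  have "w \<noteq> 0"
  proof
    assume "w = 0"
    hence "z = (\<Sum>j\<in>I. cinner (v j) z *s v j)" by (simp add: w_def)
    moreover have "(\<Sum>j\<in>I. cinner (v j) z *s v j) \<in> vec.span (v ` I)"
      by (intro vec.span_sum vec.span_scale vec.span_base) auto
    ultimately show False using z by simp
  qed
  moreover have "cinner (v k) w = 0" if k: "k \<in> I" for k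
  proof -
    have "cinner (v k) (\<Sum>j\<in>I. cinner (v j) z *s v j)
        = (\<Sum>j\<in>I. cinner (v j) z * cinner (v k) (v j))"
      using fin by (simp add: cinner_sum_right cinner_smult_right)
    also have "\<dots> = (\<Sum>j\<in>I. if j = k then cinner (v k) z else 0)"
      using k orth by (intro sum.cong refl) auto
    also have "\<dots> = cinner (v k) z" using fin k by simp
    finally show ?thesis by (simp add: w_def cinner_diff_right)
  qed
  ultimately show ?thesis by blast
qed

lemma rayleigh_maximum_exists:
  fixes A :: "complex^'n^'n" and W :: "(complex^'n) set"
  assumes closed: "closed W" and scale: "\<And>a c. a \<in> W \<Longrightarrow> c *\<^sub>R a \<in> W"
    and w: "w \<in> W" "w \<noteq> 0"
  shows "\<exists>x\<in>W. norm x = 1 \<and>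
           (\<forall>z\<in>W. Re (cinner z (A *v z)) \<le> Re (cinner x (A *v x)) * (norm z)^2)"
proof -
  define Q where "Q z = Re (cinner z (A *v z))" for z
  define S where "S = sphere (0::complex^'n) 1 \<inter> W"
  have "compact S" unfolding S_def using closed by (intro compact_Int_closed) auto
  moreover have "(1 / norm w) *\<^sub>R w \<in> S" using w scale by (simp add: S_def)
  moreover have "continuous_on S Q"
    unfolding Q_def cinner_def matrix_vector_mult_def by (intro continuous_intros)
  ultimately obtain x where xS: "x \<in> S" and xmax: "\<forall>y\<in>S. Q y \<le> Q x"
    using continuous_attains_sup[of S Q] by blast
  have "Q z \<le> Q x * (norm z)^2" if z: "z \<in> W" for z
  proof (cases "z = 0")
    case True thus ?thesis by (simp add: Q_def)
  next
    case False
    have "(1 / norm z) *\<^sub>R z \<in> S" using False scale[OF z] by (auto simp: S_def)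
    hence "Q ((1 / norm z) *\<^sub>R z) \<le> Q x" using xmax by blast
    hence "(1 / norm z)^2 * Q z \<le> Q x"
      by (simp add: Q_def mv_scaleR_right cinner_scaleR_left cinner_scaleR_right power2_eq_square)
    thus ?thesis using False by (simp add: field_simps power2_eq_square)
  qed
  thus ?thesis using xS unfolding S_def Q_def by auto
qed

text \<open>A maximiser x of the Rayleigh quotient on a subspace W is an eigenvector with eigenvalue
  l = Q x, provided the residual A x - l x lies in W: otherwise moving x in the direction of
  the residual would increase the quotient.\<close>
lemma rayleigh_maximizer_eigenvector:
  fixes A :: "complex^'n^'n" and W :: "(complex^'n) set"
  assumes herm: "hermitian A"
    and add: "\<And>a b. a \<in> W \<Longrightarrow> b \<in> W \<Longrightarrow> a + b \<in> W"
    and scale: "\<And>a c. a \<in> W \<Longrightarrow> c *\<^sub>R a \<in> W"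
    and x: "x \<in> W" "norm x = 1"
    and max: "\<forall>z\<in>W. Re (cinner z (A *v z)) \<le> l * (norm z)^2"
    and l: "l = Re (cinner x (A *v x))"
    and residual: "A *v x - l *\<^sub>R x \<in> W"
  shows "A *v x = l *\<^sub>R x"
proof -
  define y where "y = A *v x - l *\<^sub>R x"
  have Ay: "Re (cinner y (A *v x)) = (norm y)^2 + l * Re (cinner y x)"
  proof -
    have "Re (cinner y y) = Re (cinner y (A *v x)) - l * Re (cinner y x)"
      by (simp add: y_def cinner_diff_right cinner_scaleR_right)
    thus ?thesis unfolding cinner_self by simp
  qed
  have "2 * t * (norm y)^2 + t^2 * (Re (cinner y (A *v y)) - l * (norm y)^2) \<le> 0" for t
  proof -
    have "Re (cinner (x + t *\<^sub>R y) (A *v (x + t *\<^sub>R y))) \<le> l * (norm (x + t *\<^sub>R y))^2"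
      using max add scale x residual by (simp add: y_def)
    thus ?thesis
      unfolding rayleigh_line[OF herm] norm_line Ay using x l by (simp add: algebra_simps)
  qed
  hence "(norm y)^2 = 0" by (rule quadratic_nonpos_imp_zero) simp
  thus ?thesis by (simp add: y_def)
qed

lemma eigenvector_extend:
  fixes A :: "complex^'n^'n" and I :: "'n set"
  assumes herm: "hermitian A" and fin: "finite I" and kI: "k \<notin> I"
    and orth: "\<forall>i\<in>I. \<forall>j\<in>I. cinner (v i) (v j) = (if i = j then 1 else 0)"
    and eig: "\<forall>i\<in>I. A *v v i = of_real (lam i) *s v i"
  shows "\<exists>x l. cinner x x = 1 \<and> (\<forall>j\<in>I. cinner (v j) x = 0) \<and> A *v x = of_real l *s x"
proof -
  define W where "W = {z. \<forall>j\<in>I. cinner (v j) z = 0}"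
  have add: "a + b \<in> W" if "a \<in> W" "b \<in> W" for a b
    using that by (simp add: W_def cinner_add_right)
  have scale: "c *\<^sub>R a \<in> W" if "a \<in> W" for a c
    using that by (simp add: W_def cinner_scaleR_right)
  have "closed W"
  proof -
    have "W = (\<Inter>j\<in>I. {z. cinner (v j) z = 0})" by (auto simp: W_def)
    moreover have "continuous_on UNIV (cinner u)" for u
      unfolding cinner_def by (intro continuous_intros)
    ultimately show ?thesis by (auto intro!: closed_INT closed_Collect_eq continuous_on_const)
  qed
  moreover have "card I < CARD('n)" using kI by (intro psubset_card_mono) auto
  then obtain w where "w \<in> W" "w \<noteq> 0"
    using orthogonal_vector_exists[OF fin _ orth] by (auto simp: W_def)
  ultimately obtain x where xW: "x \<in> W" and nx: "norm x = 1"
    and max: "\<forall>z\<in>W. Re (cinner z (A *v z)) \<le> Re (cinner x (A *v x)) * (norm z)^2"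
    using rayleigh_maximum_exists[OF _ scale] by blast
  define l where "l = Re (cinner x (A *v x))"
  have "A *v x - l *\<^sub>R x \<in> W"
    unfolding W_def
  proof (intro CollectI ballI)
    fix j assume j: "j \<in> I"
    have "cinner (v j) (A *v x) = cinner (A *v v j) x" by (rule hermitian_cinner[OF herm])
    also have "\<dots> = 0" using eig j xW by (simp add: cinner_smult_left W_def)
    finally show "cinner (v j) (A *v x - l *\<^sub>R x) = 0"
      using j xW by (simp add: cinner_diff_right cinner_scaleR_right W_def)
  qed
  hence "A *v x = l *\<^sub>R x"
    using rayleigh_maximizer_eigenvector[OF herm add scale xW nx] max l_def by blast
  moreover have "cinner x x = 1" using nx by (simp add: cinner_self)
  ultimately show ?thesis using xW by (auto simp: W_def scaleR_as_smult)
qed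

lemma orthonormal_eigenvectors:
  fixes A :: "complex^'n^'n" and I :: "'n set"
  assumes herm: "hermitian A" and fin: "finite I"
  shows "\<exists>v lam. (\<forall>i\<in>I. \<forall>j\<in>I. cinner (v i) (v j) = (if i = j then 1 else 0))
            \<and> (\<forall>i\<in>I. A *v v i = of_real (lam i) *s v i)"
  using fin
proof (induction I rule: finite_induct)
  case empty
  show ?case by auto
next
  case (insert k I)
  then obtain v lam
    where orth: "\<forall>i\<in>I. \<forall>j\<in>I. cinner (v i) (v j) = (if i = j then 1 else 0)"
      and eig: "\<forall>i\<in>I. A *v v i = of_real (lam i) *s v i" by blast
  obtain x l where x1: "cinner x x = 1" and xo: "\<forall>j\<in>I. cinner (v j) x = 0"
    and xe: "A *v x = of_real l *s x"
    using eigenvector_extend[OF herm insert(1,2) orth eig] by blast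
  have "\<forall>j\<in>I. cinner x (v j) = 0" using xo by (metis cinner_commute complex_cnj_zero)
  hence "\<forall>i\<in>insert k I. \<forall>j\<in>insert k I.
      cinner ((v(k := x)) i) ((v(k := x)) j) = (if i = j then 1 else 0)"
    using orth xo x1 insert(2) by auto
  moreover have "\<forall>i\<in>insert k I. A *v (v(k := x)) i = of_real ((lam(k := l)) i) *s (v(k := x)) i"
    using eig xe insert(2) by auto
  ultimately show ?case by blast
qed

theorem spectral_decomposition:
  fixes A :: "complex^'n^'n"
  assumes herm: "hermitian A"
  shows "\<exists>U d. unitary U \<and> A = U ** rdiag d ** cadj U"
proof -
  obtain v :: "'n \<Rightarrow> complex^'n" and lam :: "'n \<Rightarrow> real"
    where orth: "\<forall>i j. cinner (v i) (v j) = (if i = j then 1 else 0)"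
      and eig: "\<forall>i. A *v v i = of_real (lam i) *s v i"
    using orthonormal_eigenvectors[OF herm, of UNIV] by auto
  define U :: "complex^'n^'n" where "U = (\<chi> i j. v j $ i)"
  have "(cadj U ** U) $ i $ j = cinner (v i) (v j)" for i j
    by (simp add: U_def cadj_def matrix_matrix_mult_def cinner_def)
  hence uU: "cadj U ** U = mat 1" using orth by (simp add: vec_eq_iff mat_def)
  hence Uu: "U ** cadj U = mat 1" using matrix_left_right_inverse by blast
  have "(A ** U) $ i $ j = (U ** rdiag lam) $ i $ j" for i j
  proof -
    have "(U ** rdiag lam) $ i $ j = (\<Sum>k\<in>UNIV. if k = j then v j $ i * of_real (lam j) else 0)"
      by (simp add: U_def rdiag_def matrix_matrix_mult_def if_distrib cong: if_cong)
    also have "\<dots> = (A *v v j) $ i" using eig by (simp add: mult.commute)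
    also have "\<dots> = (A ** U) $ i $ j"
      by (simp add: U_def matrix_matrix_mult_def matrix_vector_mult_def)
    finally show ?thesis by simp
  qed
  hence AU: "A ** U = U ** rdiag lam" by (simp add: vec_eq_iff)
  have "A = (A ** U) ** cadj U" by (simp add: Uu flip: matrix_mul_assoc)
  hence "A = U ** rdiag lam ** cadj U" by (simp only: AU)
  moreover have "unitary U" using uU by (simp add: unitary_def)
  ultimately show ?thesis by blast
qed

lemma mm_add_left: "((A::complex^'n^'n) + B) ** C = A ** C + B ** C"
  by (simp add: vec_eq_iff matrix_matrix_mult_def distrib_right sum.distrib)
lemma mm_diff_left: "((A::complex^'n^'n) - B) ** C = A ** C - B ** C"
  by (simp add: vec_eq_iff matrix_matrix_mult_def left_diff_distrib sum_subtractf)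
lemma mm_diff_right: "(C::complex^'n^'n) ** (A - B) = C ** A - C ** B"
  by (simp add: vec_eq_iff matrix_matrix_mult_def right_diff_distrib sum_subtractf)
lemma mm_scaleR_left: "(c *\<^sub>R (A::complex^'n^'n)) ** B = c *\<^sub>R (A ** B)"
  by (simp add: scalar_matrix_assoc)
lemma mm_scaleR_right: "(A::complex^'n^'n) ** (c *\<^sub>R B) = c *\<^sub>R (A ** B)"
  by (simp add: matrix_scalar_ac scalar_matrix_assoc)

lemma cadj_mult: "cadj ((X::complex^'n^'n) ** Y) = cadj Y ** cadj X"
  by (simp add: vec_eq_iff cadj_def matrix_matrix_mult_def mult.commute)
lemma cadj_cadj [simp]: "cadj (cadj X) = X"
  by (simp add: vec_eq_iff cadj_def)
lemma cadj_add: "cadj (X + Y) = cadj X + cadj Y"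
  by (simp add: vec_eq_iff cadj_def)
lemma cadj_diff: "cadj (X - Y) = cadj X - cadj Y"
  by (simp add: vec_eq_iff cadj_def)
lemma cadj_scaleR: "cadj (c *\<^sub>R X) = c *\<^sub>R cadj X"
  by (simp add: vec_eq_iff cadj_def)
lemma cadj_rdiag: "cadj (rdiag d) = rdiag d"
  by (simp add: vec_eq_iff cadj_def rdiag_def)

lemma trace_scaleR: "trace (c *\<^sub>R (X::complex^'n^'n)) = c *\<^sub>R trace X"
  by (simp add: trace_def scaleR_sum_right)

lemma hermitian_diff: "hermitian X \<Longrightarrow> hermitian Y \<Longrightarrow> hermitian (X - Y)"
  by (simp add: hermitian_def cadj_diff)
lemma hermitian_convex_comb:
  "hermitian X \<Longrightarrow> hermitian Y \<Longrightarrow> hermitian (t *\<^sub>R X + (1 - t) *\<^sub>R Y)"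
  by (simp add: hermitian_def cadj_add cadj_scaleR)
lemma hermitian_sandwich:
  "hermitian H \<Longrightarrow> hermitian K \<Longrightarrow> hermitian ((H::complex^'n^'n) ** K ** H)"
  by (simp add: hermitian_def cadj_mult matrix_mul_assoc)

lemma rdiag_mult: "rdiag f ** rdiag g = rdiag (\<lambda>i. f i * g i)"
proof -
  have "(rdiag f ** rdiag g) $ i $ j
      = (\<Sum>k\<in>UNIV. if k = i then (if i = j then of_real (f i * g i) else 0) else 0)" for i j
    unfolding rdiag_def matrix_matrix_mult_def vec_lambda_beta by (intro sum.cong) auto
  thus ?thesis by (simp add: vec_eq_iff rdiag_def)
qed
lemma rdiag_add: "rdiag f + rdiag g = rdiag (\<lambda>i. f i + g i)"
  by (simp add: vec_eq_iff rdiag_def)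
lemma rdiag_diff: "rdiag f - rdiag g = rdiag (\<lambda>i. f i - g i)"
  by (simp add: vec_eq_iff rdiag_def)
lemma rdiag_scaleR: "c *\<^sub>R rdiag f = rdiag (\<lambda>i. c * f i)"
  unfolding vec_eq_iff vector_scaleR_component rdiag_def vec_lambda_beta
  by (simp add: scaleR_conv_of_real)
lemma mat1_rdiag: "(mat 1 :: complex^'n^'n) = rdiag (\<lambda>_. 1)"
  by (simp add: vec_eq_iff rdiag_def mat_def)
lemma rdiag_eq_0_iff: "rdiag f = 0 \<longleftrightarrow> (\<forall>i. f i = 0)"
  by (auto simp: vec_eq_iff rdiag_def)

text \<open>A unitary matrix is invertible with inverse its adjoint (from both sides, as it is square).\<close>
lemma unitary_cancel:
  assumes "unitary U"
  shows "cadj U ** U = mat 1" "U ** cadj U = mat 1"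
    "X ** cadj U ** U = X" "X ** U ** cadj U = X"
proof -
  show u1: "cadj U ** U = mat 1" using assms by (simp add: unitary_def)
  show u2: "U ** cadj U = mat 1" using u1 matrix_left_right_inverse by blast
  show "X ** cadj U ** U = X" "X ** U ** cadj U = X"
    by (simp_all add: u1 u2 flip: matrix_mul_assoc)
qed

lemma eigenvalues_of_annihilated:
  fixes C :: "complex^'n^'n"
  assumes U: "unitary U" and CU: "C = U ** rdiag e ** cadj U"
    and ann: "(C - a *\<^sub>R mat 1) ** (C - b *\<^sub>R mat 1) = 0"
  shows "e i = a \<or> e i = b"
proof -
  note uc = unitary_cancel[OF U]
  have diag: "cadj U ** (C - c *\<^sub>R mat 1) ** U = rdiag (\<lambda>i. e i - c)" for c
  proof -
    have "cadj U ** (C - c *\<^sub>R mat 1) ** U = cadj U ** C ** U - c *\<^sub>R mat 1"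
      by (simp add: mm_diff_left mm_diff_right mm_scaleR_left mm_scaleR_right uc)
    also have "cadj U ** C ** U = rdiag e" by (simp add: CU matrix_mul_assoc uc)
    finally show ?thesis by (simp add: mat1_rdiag rdiag_scaleR rdiag_diff)
  qed
  have "rdiag (\<lambda>i. (e i - a) * (e i - b)) = rdiag (\<lambda>i. e i - a) ** rdiag (\<lambda>i. e i - b)"
    by (simp add: rdiag_mult)
  also have "\<dots> = cadj U ** ((C - a *\<^sub>R mat 1) ** (C - b *\<^sub>R mat 1)) ** U"
    unfolding diag[of a, symmetric] diag[of b, symmetric] by (simp add: matrix_mul_assoc uc)
  also have "\<dots> = 0" by (simp add: ann)
  finally show ?thesis by (simp add: rdiag_eq_0_iff)
qed

section \<open>Real powers of positive definite matrices\<close>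

text \<open>The matrix power mpow is given by Hilbert choice; by the spectral theorem the choice
  succeeds, so mpow A s arises from some spectral decomposition of A.\<close>
lemma mpow_spectral:
  assumes "posdef (A::complex^'n^'n)"
  shows "\<exists>U d. unitary U \<and> A = U ** rdiag d ** cadj U
           \<and> mpow A s = U ** rdiag (\<lambda>i. d i powr s) ** cadj U"
proof -
  obtain U d where "unitary U" "A = U ** rdiag d ** cadj U"
    using spectral_decomposition assms unfolding posdef_def by blast
  hence "\<exists>X U d. unitary U \<and> A = U ** rdiag d ** cadj U
                 \<and> X = U ** rdiag (\<lambda>i. d i powr s) ** cadj U" by blast
  from someI_ex[OF this] show ?thesis unfolding mpow_def by blast
qed

lemma hermitian_mpow:
  assumes "posdef (A::complex^'n^'n)"
  shows "hermitian (mpow A s)"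
proof -
  obtain U d where "mpow A s = U ** rdiag (\<lambda>i. d i powr s) ** cadj U"
    using mpow_spectral[OF assms] by blast
  thus ?thesis unfolding hermitian_def by (simp add: cadj_mult cadj_rdiag matrix_mul_assoc)
qed

lemma posdef_convex_comb:
  fixes A1 A2 :: "complex^'n^'n"
  assumes A: "posdef A1" "posdef A2" and t: "0 \<le> t" "t \<le> 1"
  shows "posdef (t *\<^sub>R A1 + (1 - t) *\<^sub>R A2)"
  unfolding posdef_def
proof (intro conjI allI impI)
  show "hermitian (t *\<^sub>R A1 + (1 - t) *\<^sub>R A2)"
    using A by (simp add: posdef_def hermitian_convex_comb)
  fix x :: "complex^'n" assume "x \<noteq> 0"
  hence q1: "Re (qform A1 x) > 0" and q2: "Re (qform A2 x) > 0" using A by (auto simp: posdef_def)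
  have "Re (qform (t *\<^sub>R A1 + (1 - t) *\<^sub>R A2) x) = t * Re (qform A1 x) + (1 - t) * Re (qform A2 x)"
    by (simp add: qform_cinner matrix_vector_mult_add_rdistrib mv_scaleR_left cinner_add_right
        cinner_scaleR_right)
  also have "\<dots> > 0"
    using t q1 q2 by (cases "t = 0") (auto intro: add_pos_nonneg)
  finally show "Re (qform (t *\<^sub>R A1 + (1 - t) *\<^sub>R A2) x) > 0" .
qed

section \<open>Test matrices: perturbations of a rank-one projection\<close>

definition proj :: "complex^'n \<Rightarrow> complex^'n^'n" where
  "proj u = (\<chi> i j. u $ i * cnj (u $ j))"

lemma proj_mv: "proj u *v z = cinner u z *s u"
  by (simp add: vec_eq_iff proj_def matrix_vector_mult_def cinner_def sum_distrib_left
      sum_distrib_right mult_ac)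

lemma proj_idem:
  assumes "cinner u u = 1"
  shows "proj u ** proj u = proj u"
proof -
  have "(proj u ** proj u) $ i $ j = u $ i * cnj (u $ j) * cinner u u" for i j
    by (simp add: proj_def matrix_matrix_mult_def cinner_def sum_distrib_left sum_distrib_right mult_ac)
  thus ?thesis using assms by (simp add: vec_eq_iff proj_def)
qed

lemma trace_mult_proj: "trace (M ** proj u) = qform M u"
  unfolding trace_def qform_def matrix_matrix_mult_def proj_def
  by (simp add: sum_distrib_left mult_ac)

definition test_matrix :: "real \<Rightarrow> complex^'n \<Rightarrow> complex^'n^'n" where
  "test_matrix b u = b *\<^sub>R mat 1 + (1 - b) *\<^sub>R proj u"

lemma test_matrix_posdef:
  fixes u :: "complex^'n"
  assumes b: "b > 0" and u: "cinner u u = 1"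
  shows "posdef (test_matrix b u)"
  unfolding posdef_def
proof (intro conjI allI impI)
  show "hermitian (test_matrix b u)"
    by (simp add: hermitian_def test_matrix_def cadj_add cadj_scaleR proj_def cadj_def
        vec_eq_iff mat_def mult.commute)
  fix z :: "complex^'n" assume z: "z \<noteq> 0"
  define a where "a = cinner u z"
  have za: "cinner z u = cnj a" by (simp add: a_def cinner_commute)
  define s where "s = (cmod a)^2"
  have "Re (qform (test_matrix b u) z) = b * (norm z)^2 + (1 - b) * s"
    by (simp add: qform_cinner test_matrix_def matrix_vector_mult_add_rdistrib mv_scaleR_left
        proj_mv cinner_add_right cinner_scaleR_right cinner_smult_right za a_def[symmetric]
        cinner_self s_def complex_norm_square[symmetric])
  also have "\<dots> = b * ((norm z)^2 - s) + s" by (simp add: algebra_simps)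
  finally have q: "Re (qform (test_matrix b u) z) = b * ((norm z)^2 - s) + s" .
  text \<open>Bessel's inequality |<u, z>|^2 \<le> |z|^2, from the norm of z - <u, z> u.\<close>
  have "cinner (z - a *s u) (z - a *s u) = cinner z z - a * cnj a"
    by (simp add: cinner_diff_left cinner_diff_right cinner_smult_left cinner_smult_right za u
        a_def[symmetric] algebra_simps)
  also have "a * cnj a = of_real s" by (simp only: s_def complex_norm_square)
  finally have "of_real ((norm (z - a *s u))^2) = (of_real ((norm z)^2 - s) :: complex)"
    by (simp add: cinner_self)
  hence "(norm (z - a *s u))^2 = (norm z)^2 - s" by (simp only: of_real_eq_iff)
  hence "s \<le> (norm z)^2" by (metis diff_ge_0_iff_ge zero_le_power2)
  moreover have "(norm z)^2 > 0" using z by simp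
  moreover have "s \<ge> 0" by (simp add: s_def)
  ultimately show "Re (qform (test_matrix b u) z) > 0"
    unfolding q using b by (cases "s = 0") (auto intro: add_nonneg_pos add_nonneg_nonneg)
qed

text \<open>Its spectrum lies in {b, 1}, so the r-th power agrees with the affine
  function of the matrix that sends b to b^r = e and 1 to 1.\<close>
lemma mpow_test_matrix:
  fixes u :: "complex^'n"
  assumes e: "0 < e" "e < 1" and r: "r \<noteq> 0" and u: "cinner u u = 1"
  shows "mpow (test_matrix (e powr (1/r)) u) r = e *\<^sub>R mat 1 + (1 - e) *\<^sub>R proj u"
proof -
  define b where "b = e powr (1/r)"
  define C where "C = test_matrix b u"
  have b_pow: "b powr r = e" using e r by (simp add: b_def powr_powr)
  have b1: "b \<noteq> 1" using b_pow e by auto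
  have "posdef C" using e u by (simp add: C_def b_def test_matrix_posdef)
  then obtain U d where U: "unitary U" and CU: "C = U ** rdiag d ** cadj U"
    and pow: "mpow C r = U ** rdiag (\<lambda>i. d i powr r) ** cadj U"
    using mpow_spectral[of C r] by blast
  have "C - b *\<^sub>R mat 1 = (1 - b) *\<^sub>R proj u"
    by (simp add: C_def test_matrix_def)
  moreover have "C - 1 *\<^sub>R mat 1 = (1 - b) *\<^sub>R proj u - (1 - b) *\<^sub>R mat 1"
    by (simp add: C_def test_matrix_def algebra_simps)
  ultimately have "(C - b *\<^sub>R mat 1) ** (C - 1 *\<^sub>R mat 1) = 0"
    using u by (simp add: mm_scaleR_left mm_scaleR_right mm_diff_right proj_idem)
  hence d: "d i = b \<or> d i = 1" for i by (rule eigenvalues_of_annihilated[OF U CU])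
  define \<beta> where "\<beta> = (1 - e) / (1 - b)"
  define \<alpha> where "\<alpha> = e - \<beta> * b"
  have \<beta>: "\<beta> * (1 - b) = 1 - e" using b1 by (simp add: \<beta>_def)
  have "d i powr r = \<alpha> + \<beta> * d i" for i
    using d[of i] b_pow \<beta> by (auto simp: \<alpha>_def algebra_simps)
  hence "rdiag (\<lambda>i. d i powr r) = \<alpha> *\<^sub>R mat 1 + \<beta> *\<^sub>R rdiag d"
    by (simp add: mat1_rdiag rdiag_scaleR rdiag_add)
  hence "mpow C r = U ** (\<alpha> *\<^sub>R mat 1 + \<beta> *\<^sub>R rdiag d) ** cadj U"
    by (simp only: pow)
  also have "\<dots> = \<alpha> *\<^sub>R mat 1 + \<beta> *\<^sub>R C"
    by (simp add: CU matrix_add_ldistrib mm_add_left mm_scaleR_left mm_scaleR_right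
        unitary_cancel[OF U])
  also have "\<dots> = (\<alpha> + \<beta> * b) *\<^sub>R mat 1 + (\<beta> * (1 - b)) *\<^sub>R proj u"
    by (simp add: C_def test_matrix_def algebra_simps)
  also have "\<dots> = e *\<^sub>R mat 1 + (1 - e) *\<^sub>R proj u" by (simp add: \<alpha>_def \<beta>)
  finally show ?thesis by (simp add: C_def b_def)
qed

section \<open>A trace criterion for positive semidefiniteness\<close>

lemma nonneg_from_small_weights:
  fixes T Q :: real
  assumes comb: "\<And>e. 0 < e \<Longrightarrow> e < 1 \<Longrightarrow> 0 \<le> e * T + (1 - e) * Q"
  shows "Q \<ge> 0"
proof (rule ccontr)
  assume "\<not> Q \<ge> 0"
  hence Q: "Q < 0" by simp
  define e where "e = - Q / (2 * (\<bar>T\<bar> - Q))"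
  have den: "2 * (\<bar>T\<bar> - Q) > 0" using Q by simp
  have e0: "e > 0" unfolding e_def using Q den by (intro divide_pos_pos) auto
  have eq: "e * (\<bar>T\<bar> - Q) = - Q / 2" using den by (simp add: e_def field_simps)
  have "e \<le> (\<bar>T\<bar> - Q) / (2 * (\<bar>T\<bar> - Q))"
    unfolding e_def using den by (intro divide_right_mono) auto
  also have "\<dots> = 1/2" using den by simp
  finally have e1: "e < 1" by simp
  have "e * T \<le> e * \<bar>T\<bar>" using e0 by (intro mult_left_mono) auto
  hence "e * T + (1 - e) * Q \<le> Q + e * (\<bar>T\<bar> - Q)" by (simp add: algebra_simps)
  also have "\<dots> = Q / 2" using eq by simp
  finally show False using comb[OF e0 e1] Q by linarith
qed

text \<open>A Hermitian matrix M with Re tr(M C^r) \<ge> 0 for all positive definite C is positive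
  semidefinite; the test matrices above suffice (this is where r \<noteq> 0 is needed).\<close>
lemma possemidef_from_trace:
  fixes M :: "complex^'n^'n"
  assumes r: "r \<noteq> 0" and hM: "hermitian M"
    and tr: "\<And>C. posdef C \<Longrightarrow> 0 \<le> Re (trace (M ** mpow C r))"
  shows "possemidef M"
  unfolding possemidef_def
proof (intro conjI allI hM)
  fix x :: "complex^'n"
  show "0 \<le> Re (qform M x)"
  proof (cases "x = 0")
    case True
    thus ?thesis by (simp add: qform_cinner)
  next
    case False
    define u where "u = (1 / norm x) *\<^sub>R x"
    have u: "cinner u u = 1" using False
      by (simp add: u_def cinner_scaleR_left cinner_scaleR_right cinner_self power2_eq_square)
    have "0 \<le> e * Re (trace M) + (1 - e) * Re (qform M u)" if e: "0 < e" "e < 1" for e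
    proof -
      have "posdef (test_matrix (e powr (1/r)) u)" using e u by (intro test_matrix_posdef) auto
      from tr[OF this] have "0 \<le> Re (trace (M ** (e *\<^sub>R mat 1 + (1 - e) *\<^sub>R proj u)))"
        by (simp only: mpow_test_matrix[OF e r u])
      thus ?thesis
        by (simp add: matrix_add_ldistrib mm_scaleR_right trace_add trace_scaleR trace_mult_proj)
    qed
    hence "Re (qform M u) \<ge> 0" by (rule nonneg_from_small_weights)
    moreover have "qform M x = of_real ((norm x)^2) * qform M u"
      using False by (simp add: u_def qform_cinner mv_scaleR_right cinner_scaleR_left
          cinner_scaleR_right power2_eq_square)
    ultimately show ?thesis by simp
  qed
qed

lemma loewner_le_from_trace:
  fixes X Y :: "complex^'n^'n"
  assumes r: "r \<noteq> 0" and herm: "hermitian X" "hermitian Y"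
    and tr: "\<And>C. posdef C \<Longrightarrow> Re (trace (X ** mpow C r)) \<le> Re (trace (Y ** mpow C r))"
  shows "loewner_le X Y"
  unfolding loewner_le_def
proof (rule possemidef_from_trace[OF r hermitian_diff[OF herm(2,1)]])
  fix C :: "complex^'n^'n" assume "posdef C"
  thus "0 \<le> Re (trace ((Y - X) ** mpow C r))"
    using tr by (simp add: mm_diff_left trace_sub)
qed

section \<open>From trace convexity to operator convexity\<close>

lemma trace_convex_comb:
  "Re (trace ((t *\<^sub>R F1 + (1 - t) *\<^sub>R F2) ** (D::complex^'n^'n)))
     = t * Re (trace (F1 ** D)) + (1 - t) * Re (trace (F2 ** D))"
  by (simp add: mm_add_left mm_scaleR_left trace_add trace_scaleR)

lemma convex_comb_same: "t *\<^sub>R (C::complex^'n^'n) + (1 - t) *\<^sub>R C = C"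
  by (simp add: scaleR_left_distrib[symmetric])

text \<open>Joint convexity of (A,B,C) \<mapsto> Re tr(F(A,B) C^r) forces joint operator convexity of a
  Hermitian-valued F: take C1 = C2 = C and apply the trace criterion.\<close>
lemma trace_convex_imp_operator_convex:
  fixes F :: "complex^'n^'n \<Rightarrow> complex^'n^'n \<Rightarrow> complex^'n^'n" and r :: real
  assumes r: "r \<noteq> 0" and herm: "\<And>A B. posdef A \<Longrightarrow> posdef B \<Longrightarrow> hermitian (F A B)"
    and convex: "\<forall>A1 A2 B1 B2 C1 C2 (t::real).
        posdef A1 \<longrightarrow> posdef A2 \<longrightarrow> posdef B1 \<longrightarrow> posdef B2 \<longrightarrow> posdef C1 \<longrightarrow> posdef C2 \<longrightarrow>
        0 \<le> t \<longrightarrow> t \<le> 1 \<longrightarrow>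
        (let A = t *\<^sub>R A1 + (1 - t) *\<^sub>R A2; B = t *\<^sub>R B1 + (1 - t) *\<^sub>R B2;
             C = t *\<^sub>R C1 + (1 - t) *\<^sub>R C2 in
         Re (trace (F A B ** mpow C r))
         \<le> t * Re (trace (F A1 B1 ** mpow C1 r)) + (1 - t) * Re (trace (F A2 B2 ** mpow C2 r)))"
  shows "\<forall>A1 A2 B1 B2 (t::real).
        posdef A1 \<longrightarrow> posdef A2 \<longrightarrow> posdef B1 \<longrightarrow> posdef B2 \<longrightarrow> 0 \<le> t \<longrightarrow> t \<le> 1 \<longrightarrow>
        (let A = t *\<^sub>R A1 + (1 - t) *\<^sub>R A2; B = t *\<^sub>R B1 + (1 - t) *\<^sub>R B2 in
         loewner_le (F A B) (t *\<^sub>R F A1 B1 + (1 - t) *\<^sub>R F A2 B2))"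
proof (intro allI impI)
  fix A1 A2 B1 B2 :: "complex^'n^'n" and t :: real
  assume a: "posdef A1" "posdef A2" "posdef B1" "posdef B2" "0 \<le> t" "t \<le> 1"
  define A where "A = t *\<^sub>R A1 + (1 - t) *\<^sub>R A2"
  define B where "B = t *\<^sub>R B1 + (1 - t) *\<^sub>R B2"
  have "posdef A" "posdef B" using a by (simp_all add: A_def B_def posdef_convex_comb)
  have "loewner_le (F A B) (t *\<^sub>R F A1 B1 + (1 - t) *\<^sub>R F A2 B2)"
  proof (rule loewner_le_from_trace[OF r])
    show "hermitian (F A B)" "hermitian (t *\<^sub>R F A1 B1 + (1 - t) *\<^sub>R F A2 B2)"
      using a \<open>posdef A\<close> \<open>posdef B\<close> by (simp_all add: herm hermitian_convex_comb)
    fix C :: "complex^'n^'n" assume "posdef C"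
    from convex[rule_format, OF a(1-4) this this a(5,6)]
    show "Re (trace (F A B ** mpow C r))
        \<le> Re (trace ((t *\<^sub>R F A1 B1 + (1 - t) *\<^sub>R F A2 B2) ** mpow C r))"
      by (simp add: Let_def convex_comb_same trace_convex_comb A_def B_def)
  qed
  thus "let A = t *\<^sub>R A1 + (1 - t) *\<^sub>R A2; B = t *\<^sub>R B1 + (1 - t) *\<^sub>R B2 in
        loewner_le (F A B) (t *\<^sub>R F A1 B1 + (1 - t) *\<^sub>R F A2 B2)"
    by (simp add: A_def B_def)
qed

lemma trace_concave_imp_operator_concave:
  fixes F :: "complex^'n^'n \<Rightarrow> complex^'n^'n \<Rightarrow> complex^'n^'n" and r :: real
  assumes r: "r \<noteq> 0" and herm: "\<And>A B. posdef A \<Longrightarrow> posdef B \<Longrightarrow> hermitian (F A B)"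
    and concave: "\<forall>A1 A2 B1 B2 C1 C2 (t::real).
        posdef A1 \<longrightarrow> posdef A2 \<longrightarrow> posdef B1 \<longrightarrow> posdef B2 \<longrightarrow> posdef C1 \<longrightarrow> posdef C2 \<longrightarrow>
        0 \<le> t \<longrightarrow> t \<le> 1 \<longrightarrow>
        (let A = t *\<^sub>R A1 + (1 - t) *\<^sub>R A2; B = t *\<^sub>R B1 + (1 - t) *\<^sub>R B2;
             C = t *\<^sub>R C1 + (1 - t) *\<^sub>R C2 in
         t * Re (trace (F A1 B1 ** mpow C1 r)) + (1 - t) * Re (trace (F A2 B2 ** mpow C2 r))
         \<le> Re (trace (F A B ** mpow C r)))"
  shows "\<forall>A1 A2 B1 B2 (t::real).
        posdef A1 \<longrightarrow> posdef A2 \<longrightarrow> posdef B1 \<longrightarrow> posdef B2 \<longrightarrow> 0 \<le> t \<longrightarrow> t \<le> 1 \<longrightarrow>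
        (let A = t *\<^sub>R A1 + (1 - t) *\<^sub>R A2; B = t *\<^sub>R B1 + (1 - t) *\<^sub>R B2 in
         loewner_le (t *\<^sub>R F A1 B1 + (1 - t) *\<^sub>R F A2 B2) (F A B))"
proof (intro allI impI)
  fix A1 A2 B1 B2 :: "complex^'n^'n" and t :: real
  assume a: "posdef A1" "posdef A2" "posdef B1" "posdef B2" "0 \<le> t" "t \<le> 1"
  define A where "A = t *\<^sub>R A1 + (1 - t) *\<^sub>R A2"
  define B where "B = t *\<^sub>R B1 + (1 - t) *\<^sub>R B2"
  have "posdef A" "posdef B" using a by (simp_all add: A_def B_def posdef_convex_comb)
  have "loewner_le (t *\<^sub>R F A1 B1 + (1 - t) *\<^sub>R F A2 B2) (F A B)"
  proof (rule loewner_le_from_trace[OF r])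
    show "hermitian (F A B)" "hermitian (t *\<^sub>R F A1 B1 + (1 - t) *\<^sub>R F A2 B2)"
      using a \<open>posdef A\<close> \<open>posdef B\<close> by (simp_all add: herm hermitian_convex_comb)
    fix C :: "complex^'n^'n" assume "posdef C"
    from concave[rule_format, OF a(1-4) this this a(5,6)]
    show "Re (trace ((t *\<^sub>R F A1 B1 + (1 - t) *\<^sub>R F A2 B2) ** mpow C r))
        \<le> Re (trace (F A B ** mpow C r))"
      by (simp add: Let_def convex_comb_same trace_convex_comb A_def B_def)
  qed
  thus "let A = t *\<^sub>R A1 + (1 - t) *\<^sub>R A2; B = t *\<^sub>R B1 + (1 - t) *\<^sub>R B2 in
        loewner_le (t *\<^sub>R F A1 B1 + (1 - t) *\<^sub>R F A2 B2) (F A B)"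
    by (simp add: A_def B_def)
qed

theorem lemma3p1:
  fixes p q r :: real
  assumes "p \<noteq> 0" and "q \<noteq> 0" and "r \<noteq> 0"
  shows
   "((\<forall>(A1::complex^'n^'n) A2 B1 B2 C1 C2 (t::real).
        posdef A1 \<longrightarrow> posdef A2 \<longrightarrow> posdef B1 \<longrightarrow> posdef B2 \<longrightarrow> posdef C1 \<longrightarrow> posdef C2 \<longrightarrow>
        0 \<le> t \<longrightarrow> t \<le> 1 \<longrightarrow>
        (let A = t *\<^sub>R A1 + (1 - t) *\<^sub>R A2; B = t *\<^sub>R B1 + (1 - t) *\<^sub>R B2;
             C = t *\<^sub>R C1 + (1 - t) *\<^sub>R C2 in
         Re (trace (mpow A (q/2) ** mpow B p ** mpow A (q/2) ** mpow C r))
         \<le> t * Re (trace (mpow A1 (q/2) ** mpow B1 p ** mpow A1 (q/2) ** mpow C1 r))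
           + (1 - t) * Re (trace (mpow A2 (q/2) ** mpow B2 p ** mpow A2 (q/2) ** mpow C2 r))))
     \<longrightarrow>
     (\<forall>(A1::complex^'n^'n) A2 B1 B2 (t::real).
        posdef A1 \<longrightarrow> posdef A2 \<longrightarrow> posdef B1 \<longrightarrow> posdef B2 \<longrightarrow>
        0 \<le> t \<longrightarrow> t \<le> 1 \<longrightarrow>
        (let A = t *\<^sub>R A1 + (1 - t) *\<^sub>R A2; B = t *\<^sub>R B1 + (1 - t) *\<^sub>R B2 in
         loewner_le (mpow A (q/2) ** mpow B p ** mpow A (q/2))
           (t *\<^sub>R (mpow A1 (q/2) ** mpow B1 p ** mpow A1 (q/2))
            + (1 - t) *\<^sub>R (mpow A2 (q/2) ** mpow B2 p ** mpow A2 (q/2))))))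
   \<and>
   ((\<forall>(A1::complex^'n^'n) A2 B1 B2 C1 C2 (t::real).
        posdef A1 \<longrightarrow> posdef A2 \<longrightarrow> posdef B1 \<longrightarrow> posdef B2 \<longrightarrow> posdef C1 \<longrightarrow> posdef C2 \<longrightarrow>
        0 \<le> t \<longrightarrow> t \<le> 1 \<longrightarrow>
        (let A = t *\<^sub>R A1 + (1 - t) *\<^sub>R A2; B = t *\<^sub>R B1 + (1 - t) *\<^sub>R B2;
             C = t *\<^sub>R C1 + (1 - t) *\<^sub>R C2 in
         t * Re (trace (mpow A1 (q/2) ** mpow B1 p ** mpow A1 (q/2) ** mpow C1 r))
           + (1 - t) * Re (trace (mpow A2 (q/2) ** mpow B2 p ** mpow A2 (q/2) ** mpow C2 r))
         \<le> Re (trace (mpow A (q/2) ** mpow B p ** mpow A (q/2) ** mpow C r))))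
     \<longrightarrow>
     (\<forall>(A1::complex^'n^'n) A2 B1 B2 (t::real).
        posdef A1 \<longrightarrow> posdef A2 \<longrightarrow> posdef B1 \<longrightarrow> posdef B2 \<longrightarrow>
        0 \<le> t \<longrightarrow> t \<le> 1 \<longrightarrow>
        (let A = t *\<^sub>R A1 + (1 - t) *\<^sub>R A2; B = t *\<^sub>R B1 + (1 - t) *\<^sub>R B2 in
         loewner_le
           (t *\<^sub>R (mpow A1 (q/2) ** mpow B1 p ** mpow A1 (q/2))
            + (1 - t) *\<^sub>R (mpow A2 (q/2) ** mpow B2 p ** mpow A2 (q/2)))
           (mpow A (q/2) ** mpow B p ** mpow A (q/2)))))"
proof -
  let ?F = "\<lambda>(A::complex^'n^'n) (B::complex^'n^'n). mpow A (q/2) ** mpow B p ** mpow A (q/2)"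
  have herm: "hermitian (?F A B)" if "posdef A" "posdef B" for A B
    using that by (intro hermitian_sandwich hermitian_mpow)
  show ?thesis
    using impI[OF trace_convex_imp_operator_convex[OF assms(3), where F = ?F, OF herm]]
      impI[OF trace_concave_imp_operator_concave[OF assms(3), where F = ?F, OF herm]]
    by (rule conjI)
qed

end
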